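(* Let $A,B,C$ be non-zero integers and let $(x_0,y_0,z_0)$ be a non-trivial integer solution of $Ax^2+By^2+Cz^2=0$ with $z_0\neq0$. Define $$P_x(m,n)=x_0Am^2+2y_0Bmn-x_0Bn^2,\quad P_y(m,n)=-y_0Am^2+2x_0Amn+y_0Bn^2,\quad P_z(m,n)=z_0Am^2+z_0Bn^2.$$ Then every integer solution $(x,y,z)$ of $Ax^2+By^2+Cz^2=0$ can be written as $$(x,y,z)=\frac{p}{q}\big(P_x(m,n),P_y(m,n),P_z(m,n)\big)$$ with integers $m,n$ coprime, integers $p,q$ coprime, and $q>0$; moreover, in any such representation of an integer triple $(x,y,z)$ (with $\gcd(m,n)=\gcd(p,q)=1$, $q>0$), $q$ divides $2\,\mathrm{lcm}(A,B)\,C\,z_0^2$. *)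

theory Defs
  imports Complex_Main
begin

definition Px :: "int \<Rightarrow> int \<Rightarrow> int \<Rightarrow> int \<Rightarrow> int \<Rightarrow> int \<Rightarrow> int \<Rightarrow> int" where
  "Px A B x0 y0 z0 m n = x0 * A * m^2 + 2 * y0 * B * m * n - x0 * B * n^2"

definition Py :: "int \<Rightarrow> int \<Rightarrow> int \<Rightarrow> int \<Rightarrow> int \<Rightarrow> int \<Rightarrow> int \<Rightarrow> int" where
  "Py A B x0 y0 z0 m n = - y0 * A * m^2 + 2 * x0 * A * m * n + y0 * B * n^2"

definition Pz :: "int \<Rightarrow> int \<Rightarrow> int \<Rightarrow> int \<Rightarrow> int \<Rightarrow> int \<Rightarrow> int \<Rightarrow> int" where
  "Pz A B x0 y0 z0 m n = z0 * A * m^2 + z0 * B * n^2"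

end

theory Submission imports Defs begin

(* Parametrising the integer points of the conic  A x^2 + B y^2 + C z^2 = 0  from a known
   point (x0, y0, z0) with z0 <> 0.  Write P(m,n) = (Px, Py, Pz)(m,n).

   Every solution (x,y,z) is proportional to some P(m0,n0) with (m0,n0) <> (0,0):
   a solution on the line through 0 and (x0,y0,z0) (including the zero solution) is a
   multiple of P(x0,y0) = -C z0^2 (x0,y0,z0); any other solution is recovered from the chord through
   (x0,y0,z0), namely P(B(y0 z - z0 y), A(z0 x - x0 z)) = k (x,y,z) with k <> 0, since P only
   vanishes at (0,0).  Dividing (m0,n0) by their gcd (P is homogeneous of degree 2) and
   reducing the rational factor gives the normalised representation.

   If (x,y,z) = p/q P(m,n) with gcd(p,q) = 1, then q divides each
   coordinate of P(m,n).  Two linear combinations of these coordinates equal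
   2 A C z0^2 m^2 and 2 B C z0^2 n^2, so q divides 2 lcm(A,B) C z0^2 times both m^2 and
   n^2, hence q divides 2 lcm(A,B) C z0^2 because m^2 and n^2 are coprime. *)

definition represents ::
  "int \<Rightarrow> int \<Rightarrow> int \<Rightarrow> int \<Rightarrow> int \<Rightarrow> int \<Rightarrow> int \<Rightarrow> int \<Rightarrow> int \<Rightarrow> int \<Rightarrow> int \<Rightarrow> int \<Rightarrow> bool"
  where "represents A B x0 y0 z0 x y z m n p q \<longleftrightarrow>
    coprime m n \<and> coprime p q \<and> q > 0 \<and>
    real_of_int x = real_of_int p / real_of_int q * real_of_int (Px A B x0 y0 z0 m n) \<and>
    real_of_int y = real_of_int p / real_of_int q * real_of_int (Py A B x0 y0 z0 m n) \<and>
    real_of_int z = real_of_int p / real_of_int q * real_of_int (Pz A B x0 y0 z0 m n)"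

lemma P_homogeneous:
  "Px A B x0 y0 z0 (g*m) (g*n) = g^2 * Px A B x0 y0 z0 m n"
  "Py A B x0 y0 z0 (g*m) (g*n) = g^2 * Py A B x0 y0 z0 m n"
  "Pz A B x0 y0 z0 (g*m) (g*n) = g^2 * Pz A B x0 y0 z0 m n"
  unfolding Px_def Py_def Pz_def by algebra+

lemma P_at_base_point:
  assumes "A*x0^2 + B*y0^2 + C*z0^2 = 0"
  shows "Px A B x0 y0 z0 x0 y0 = -C*z0^2*x0"
    "Py A B x0 y0 z0 x0 y0 = -C*z0^2*y0"
    "Pz A B x0 y0 z0 x0 y0 = -C*z0^2*z0"
  using assms unfolding Px_def Py_def Pz_def by algebra+

text \<open>Chord construction: the parameter read off from the line through the base point and
  a second solution \<open>(x,y,z)\<close> maps back to a multiple of \<open>(x,y,z)\<close>.\<close>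

lemma P_at_chord_parameter:
  assumes base: "A*x0^2 + B*y0^2 + C*z0^2 = 0" and sol: "A*x^2 + B*y^2 + C*z^2 = 0"
    and "z0 \<noteq> 0"
  defines "k \<equiv> -2*A*B*z0^2*(A*x0*x + B*y0*y + C*z0*z)"
  shows "Px A B x0 y0 z0 (B*(y0*z - z0*y)) (A*(z0*x - x0*z)) = k*x"
    "Py A B x0 y0 z0 (B*(y0*z - z0*y)) (A*(z0*x - x0*z)) = k*y"
    "Pz A B x0 y0 z0 (B*(y0*z - z0*y)) (A*(z0*x - x0*z)) = k*z"
proof -
  have "z0 * Px A B x0 y0 z0 (B*(y0*z - z0*y)) (A*(z0*x - x0*z)) = z0 * (k*x)"
    "z0 * Py A B x0 y0 z0 (B*(y0*z - z0*y)) (A*(z0*x - x0*z)) = z0 * (k*y)"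
    "z0 * Pz A B x0 y0 z0 (B*(y0*z - z0*y)) (A*(z0*x - x0*z)) = z0 * (k*z)"
    using base sol unfolding Px_def Py_def Pz_def k_def by algebra+
  then show "Px A B x0 y0 z0 (B*(y0*z - z0*y)) (A*(z0*x - x0*z)) = k*x"
    "Py A B x0 y0 z0 (B*(y0*z - z0*y)) (A*(z0*x - x0*z)) = k*y"
    "Pz A B x0 y0 z0 (B*(y0*z - z0*y)) (A*(z0*x - x0*z)) = k*z"
    using \<open>z0 \<noteq> 0\<close> by simp_all
qed

text \<open>\<open>P\<close> has no non-trivial zero: \<open>Pz = 0\<close> forces \<open>A m^2 + B n^2 = 0\<close>, and then either
  \<open>(m,n)\<close> is proportional to \<open>(x0,y0)\<close>, impossible as \<open>C z0^2 \<noteq> 0\<close>, or \<open>Px = Py = 0\<close>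
  forces \<open>m = n = 0\<close>.\<close>

lemma P_zero_only_at_origin:
  assumes "A \<noteq> 0" "B \<noteq> 0" "C \<noteq> 0" "z0 \<noteq> 0" and base: "A*x0^2 + B*y0^2 + C*z0^2 = 0"
    and "Px A B x0 y0 z0 m n = 0" "Py A B x0 y0 z0 m n = 0" "Pz A B x0 y0 z0 m n = 0"
  shows "m = 0 \<and> n = 0"
proof -
  have conic: "A*m^2 + B*n^2 = 0"
    using assms(4,8) unfolding Pz_def by (metis distrib_left mult.assoc mult_eq_0_iff)
  have from_Px: "B*n*(y0*m - x0*n) = 0" using conic assms(6) unfolding Px_def by algebra
  have from_Py: "A*m*(y0*m - x0*n) = 0" using conic assms(7) unfolding Py_def by algebra
  show ?thesis
  proof (cases "y0*m - x0*n = 0")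
    case False
    then show ?thesis using from_Px from_Py assms(1,2) by auto
  next
    case True
    have "m^2 * (C*z0^2) = 0" using True conic base by algebra
    then have "m = 0" using assms(3,4) by simp
    then show ?thesis using conic assms(2) by simp
  qed
qed

lemma solution_multiple_of_P:
  assumes "A \<noteq> 0" "B \<noteq> 0" "C \<noteq> 0" "z0 \<noteq> 0"
    and base: "A*x0^2 + B*y0^2 + C*z0^2 = 0" and sol: "A*x^2 + B*y^2 + C*z^2 = 0"
  obtains a b m0 n0 where "b \<noteq> 0" "(m0, n0) \<noteq> (0, 0)"
    "b*x = a * Px A B x0 y0 z0 m0 n0" "b*y = a * Py A B x0 y0 z0 m0 n0"
    "b*z = a * Pz A B x0 y0 z0 m0 n0"
proof (cases "z0*x = x0*z \<and> z0*y = y0*z")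
  case on_line: True
  have "(x0, y0) \<noteq> (0, 0)" using base assms(3,4) by auto
  moreover have "-C*z0^3 \<noteq> 0" using assms(3,4) by simp
  moreover have "-C*z0^3 * x = z * Px A B x0 y0 z0 x0 y0"
    "-C*z0^3 * y = z * Py A B x0 y0 z0 x0 y0"
    unfolding P_at_base_point[OF base] using on_line by algebra+
  moreover have "-C*z0^3 * z = z * Pz A B x0 y0 z0 x0 y0"
    unfolding P_at_base_point[OF base] by algebra
  ultimately show ?thesis using that by blast
next
  case off_line: False
  define k where "k = -2*A*B*z0^2*(A*x0*x + B*y0*y + C*z0*z)"
  define l1 where "l1 = B*(y0*z - z0*y)"
  define l2 where "l2 = A*(z0*x - x0*z)"
  have chord: "Px A B x0 y0 z0 l1 l2 = k*x" "Py A B x0 y0 z0 l1 l2 = k*y"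
    "Pz A B x0 y0 z0 l1 l2 = k*z"
    using P_at_chord_parameter[OF base sol assms(4)] unfolding k_def l1_def l2_def by simp_all
  have l_nonzero: "(l1, l2) \<noteq> (0, 0)"
    using off_line assms(1,2) unfolding l1_def l2_def by auto
  have "k \<noteq> 0"
  proof
    assume "k = 0"
    then have "l1 = 0 \<and> l2 = 0"
      by (intro P_zero_only_at_origin[OF assms(1-4) base]) (simp_all add: chord)
    then show False using l_nonzero by simp
  qed
  then show ?thesis using that[of k l1 l2 1] l_nonzero chord by simp
qed

lemma reduced_fraction:
  fixes a b :: int
  obtains p q where "coprime p q" "q > 0"
    "real_of_int a / real_of_int b = real_of_int p / real_of_int q"
proof -
  obtain p q where pq: "quotient_of (of_int a / of_int b :: rat) = (p, q)"
    by (cases "quotient_of (of_int a / of_int b :: rat)")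
  have "real_of_rat (of_int a / of_int b) = real_of_rat (of_int p / of_int q)"
    using quotient_of_div[OF pq] by simp
  then have "real_of_int a / real_of_int b = real_of_int p / real_of_int q"
    by (simp add: of_rat_divide)
  then show ?thesis using that quotient_of_coprime[OF pq] quotient_of_denom_pos[OF pq] by blast
qed

lemma normalise_representation:
  assumes "b \<noteq> 0" "(m0, n0) \<noteq> (0, 0)"
    and "b*x = a * Px A B x0 y0 z0 m0 n0" "b*y = a * Py A B x0 y0 z0 m0 n0"
    "b*z = a * Pz A B x0 y0 z0 m0 n0"
  shows "\<exists>m n p q. represents A B x0 y0 z0 x y z m n p q"
proof -
  define g where "g = gcd m0 n0"
  define m where "m = m0 div g"
  define n where "n = n0 div g"
  have "coprime m n" unfolding m_def n_def g_def using assms(2) div_gcd_coprime by auto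
  have m0_eq: "m0 = g*m" and n0_eq: "n0 = g*n" unfolding m_def n_def g_def by simp_all
  obtain p q where "coprime p q" "q > 0"
    and factor: "real_of_int (a*g^2) / real_of_int b = real_of_int p / real_of_int q"
    by (rule reduced_fraction)
  have rescale: "real_of_int u = real_of_int p / real_of_int q * real_of_int V"
    if "b*u = a*(g^2*V)" for u V
  proof -
    have "real_of_int b * real_of_int u = real_of_int (a*g^2) * real_of_int V"
      using that by (metis of_int_mult mult.assoc)
    then have "real_of_int u = real_of_int (a*g^2) / real_of_int b * real_of_int V"
      using assms(1) by (simp add: field_simps)
    then show ?thesis by (simp only: factor)
  qed
  have "real_of_int x = real_of_int p / real_of_int q * real_of_int (Px A B x0 y0 z0 m n)"
    "real_of_int y = real_of_int p / real_of_int q * real_of_int (Py A B x0 y0 z0 m n)"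
    "real_of_int z = real_of_int p / real_of_int q * real_of_int (Pz A B x0 y0 z0 m n)"
    using assms(3-5) unfolding m0_eq n0_eq P_homogeneous by (blast intro: rescale)+
  then have "represents A B x0 y0 z0 x y z m n p q"
    unfolding represents_def using \<open>coprime m n\<close> \<open>coprime p q\<close> \<open>q > 0\<close> by blast
  then show ?thesis by blast
qed

lemma denominator_dvd:
  fixes x p q V :: int
  assumes "coprime p q" "q > 0"
    and "real_of_int x = real_of_int p / real_of_int q * real_of_int V"
  shows "q dvd V"
proof -
  have "real_of_int (q*x) = real_of_int (p*V)" using assms(2,3) by (simp add: field_simps)
  then have "q*x = p*V" by (simp only: of_int_eq_iff)
  then have "q dvd p*V" by (metis dvd_triv_left)
  moreover have "coprime q p" using assms(1) coprime_commute by blast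
  ultimately show ?thesis by (simp add: coprime_dvd_mult_right_iff)
qed

lemma P_combination_m:
  assumes "A*x0^2 + B*y0^2 + C*z0^2 = 0"
  shows "2*A*C*z0^2*m^2 = -A*x0*Px A B x0 y0 z0 m n + B*y0*Py A B x0 y0 z0 m n
                         + C*z0*Pz A B x0 y0 z0 m n"
  using assms unfolding Px_def Py_def Pz_def by algebra

lemma P_combination_n:
  assumes "A*x0^2 + B*y0^2 + C*z0^2 = 0"
  shows "2*B*C*z0^2*n^2 = A*x0*Px A B x0 y0 z0 m n - B*y0*Py A B x0 y0 z0 m n
                         + C*z0*Pz A B x0 y0 z0 m n"
  using assms unfolding Px_def Py_def Pz_def by algebra

lemma common_divisor_of_P:
  fixes d :: int
  assumes base: "A*x0^2 + B*y0^2 + C*z0^2 = 0" and "coprime m n"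
    and dx: "d dvd Px A B x0 y0 z0 m n" and dy: "d dvd Py A B x0 y0 z0 m n"
    and dz: "d dvd Pz A B x0 y0 z0 m n"
  shows "d dvd 2 * lcm A B * C * z0^2"
proof -
  let ?L = "2 * lcm A B * C * z0^2"
  have "d dvd 2*A*C*z0^2*m^2"
    by (subst P_combination_m[OF base, of _ n]) (intro dvd_add dvd_mult dx dy dz)
  also have "2*A*C*z0^2*m^2 dvd ?L * m^2" by (simp add: mult_dvd_mono)
  finally have dm: "d dvd ?L * m^2" .
  have "d dvd 2*B*C*z0^2*n^2"
    by (subst P_combination_n[OF base, of _ m]) (intro dvd_add dvd_diff dvd_mult dx dy dz)
  also have "2*B*C*z0^2*n^2 dvd ?L * n^2" by (simp add: mult_dvd_mono)
  finally have dn: "d dvd ?L * n^2" .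
  have "d dvd gcd (?L * m^2) (?L * n^2)" using dm dn by simp
  also have "gcd (?L * m^2) (?L * n^2) = normalize ?L"
    using \<open>coprime m n\<close> by (simp add: gcd_mult_left)
  finally show ?thesis by simp
qed

theorem theorem5:
  fixes A B C x0 y0 z0 :: int
  assumes "A \<noteq> 0" and "B \<noteq> 0" and "C \<noteq> 0"
    and "A * x0^2 + B * y0^2 + C * z0^2 = 0"
    and "(x0, y0, z0) \<noteq> (0, 0, 0)"
    and "z0 \<noteq> 0"
  shows "(\<forall>x y z :: int. A * x^2 + B * y^2 + C * z^2 = 0 \<longrightarrow>
            (\<exists>m n p q :: int. coprime m n \<and> coprime p q \<and> q > 0 \<and>
               real_of_int x = real_of_int p / real_of_int q * real_of_int (Px A B x0 y0 z0 m n) \<and>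
               real_of_int y = real_of_int p / real_of_int q * real_of_int (Py A B x0 y0 z0 m n) \<and>
               real_of_int z = real_of_int p / real_of_int q * real_of_int (Pz A B x0 y0 z0 m n)))
       \<and> (\<forall>x y z m n p q :: int. coprime m n \<and> coprime p q \<and> q > 0 \<and>
               real_of_int x = real_of_int p / real_of_int q * real_of_int (Px A B x0 y0 z0 m n) \<and>
               real_of_int y = real_of_int p / real_of_int q * real_of_int (Py A B x0 y0 z0 m n) \<and>
               real_of_int z = real_of_int p / real_of_int q * real_of_int (Pz A B x0 y0 z0 m n)
            \<longrightarrow> q dvd 2 * lcm A B * C * z0^2)"
  unfolding represents_def [symmetric]
proof (intro conjI allI impI)
  fix x y z :: int
  assume "A * x^2 + B * y^2 + C * z^2 = 0"
  then obtain a b m0 n0 where "b \<noteq> 0" "(m0, n0) \<noteq> (0, 0)"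
    "b*x = a * Px A B x0 y0 z0 m0 n0" "b*y = a * Py A B x0 y0 z0 m0 n0"
    "b*z = a * Pz A B x0 y0 z0 m0 n0"
    by (rule solution_multiple_of_P[OF assms(1-3,6,4)])
  then show "\<exists>m n p q. represents A B x0 y0 z0 x y z m n p q"
    by (rule normalise_representation)
next
  fix x y z m n p q :: int
  assume "represents A B x0 y0 z0 x y z m n p q"
  then have "coprime m n" and "coprime p q" "q > 0"
    and "q dvd Px A B x0 y0 z0 m n" "q dvd Py A B x0 y0 z0 m n" "q dvd Pz A B x0 y0 z0 m n"
    unfolding represents_def using denominator_dvd[of p q] by auto
  then show "q dvd 2 * lcm A B * C * z0^2"
    by (intro common_divisor_of_P[OF assms(4)])
qed

end
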